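(* Let $\mathbb{A}$ be a medial algebra over a field of characteristic not $2,3$ and let $\zeta\in\{-1,1\}$. Define on $\mathbb{A}\times\mathbb{A}$ the multiplication $$(x,y)\circ(z,w)=\big(xz+yw,\ \zeta(xw+yz)\big).$$ Then the resulting algebra $(\mathbb{A}\times\mathbb{A})_\zeta$ is medial, and $\mathbb{A}\times 0$ is a medial subalgebra of it isomorphic to $\mathbb{A}$.
   Context: All algebras are commutative, possibly nonassociative, finite-dimensional. Medial: $(xy)(zw)=(xz)(yw)$ identically. *)

theory Defs
  imports "HOL-Analysis.Product_Vector"
begin

definition bilinear_prod :: "('k::field \<Rightarrow> 'v::ab_group_add \<Rightarrow> 'v) \<Rightarrow> ('v \<Rightarrow> 'v \<Rightarrow> 'v) \<Rightarrow> bool" where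
  "bilinear_prod smul mult \<longleftrightarrow>
     (\<forall>x y z. mult (x + y) z = mult x z + mult y z) \<and>
     (\<forall>x y z. mult x (y + z) = mult x y + mult x z) \<and>
     (\<forall>c x y. mult (smul c x) y = smul c (mult x y)) \<and>
     (\<forall>c x y. mult x (smul c y) = smul c (mult x y))"

definition comm_fd_algebra :: "('k::field \<Rightarrow> 'v::ab_group_add \<Rightarrow> 'v) \<Rightarrow> ('v \<Rightarrow> 'v \<Rightarrow> 'v) \<Rightarrow> bool" where
  "comm_fd_algebra smul mult \<longleftrightarrow>
     (\<exists>B. finite_dimensional_vector_space smul B) \<and>
     bilinear_prod smul mult \<and>
     (\<forall>x y. mult x y = mult y x)"

definition medial_on :: "'v set \<Rightarrow> ('v \<Rightarrow> 'v \<Rightarrow> 'v) \<Rightarrow> bool" where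
  "medial_on S mult \<longleftrightarrow>
     (\<forall>x\<in>S. \<forall>y\<in>S. \<forall>z\<in>S. \<forall>w\<in>S. mult (mult x y) (mult z w) = mult (mult x z) (mult y w))"

abbreviation medial :: "('v \<Rightarrow> 'v \<Rightarrow> 'v) \<Rightarrow> bool" where
  "medial mult \<equiv> medial_on UNIV mult"

definition subalgebra :: "('k::field \<Rightarrow> 'v::ab_group_add \<Rightarrow> 'v) \<Rightarrow> ('v \<Rightarrow> 'v \<Rightarrow> 'v) \<Rightarrow> 'v set \<Rightarrow> bool" where
  "subalgebra smul mult S \<longleftrightarrow>
     module.subspace smul S \<and> (\<forall>x\<in>S. \<forall>y\<in>S. mult x y \<in> S)"

definition pair_scale :: "('k \<Rightarrow> 'v \<Rightarrow> 'v) \<Rightarrow> 'k \<Rightarrow> 'v \<times> 'v \<Rightarrow> 'v \<times> 'v" where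
  "pair_scale smul c p = (smul c (fst p), smul c (snd p))"

definition zeta_mult :: "('k \<Rightarrow> 'v::plus \<Rightarrow> 'v) \<Rightarrow> ('v \<Rightarrow> 'v \<Rightarrow> 'v) \<Rightarrow> 'k \<Rightarrow> 'v \<times> 'v \<Rightarrow> 'v \<times> 'v \<Rightarrow> 'v \<times> 'v" where
  "zeta_mult smul mult \<zeta> p q =
     (mult (fst p) (fst q) + mult (snd p) (snd q),
      smul \<zeta> (mult (fst p) (snd q) + mult (snd p) (fst q)))"

definition alg_iso_onto :: "('k::field \<Rightarrow> 'v::ab_group_add \<Rightarrow> 'v) \<Rightarrow> ('v \<Rightarrow> 'v \<Rightarrow> 'v) \<Rightarrow>
     ('k \<Rightarrow> 'w::ab_group_add \<Rightarrow> 'w) \<Rightarrow> ('w \<Rightarrow> 'w \<Rightarrow> 'w) \<Rightarrow> 'w set \<Rightarrow> ('v \<Rightarrow> 'w) \<Rightarrow> bool" where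
  "alg_iso_onto smul1 mult1 smul2 mult2 S f \<longleftrightarrow>
     Vector_Spaces.linear smul1 smul2 f \<and> bij_betw f UNIV S \<and>
     (\<forall>x y. f (mult1 x y) = mult2 (f x) (f y))"

end

theory Submission
  imports Defs
begin

(* Multiplying out by bilinearity, each component of either side of the medial identity
   for (A \<times> A)\<^sub>\<zeta> is a sum of eight terms (ab)(cd), a, b, c, d components of the four
   factors. The medial law of A matches the terms of the two sides one by one; the attached
   powers of \<zeta> agree because \<zeta>\<^sup>2 = 1. On A \<times> 0 all second components vanish, so
   x \<mapsto> (x, 0) is an algebra isomorphism onto A \<times> 0. *)

lemma bilinear_prodD:
  assumes "bilinear_prod smul mult"
  shows bilinear_prod_add_left: "mult (x + y) z = mult x z + mult y z"
    and bilinear_prod_add_right: "mult x (y + z) = mult x y + mult x z"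
    and bilinear_prod_scale_left: "mult (smul c x) y = smul c (mult x y)"
    and bilinear_prod_scale_right: "mult x (smul c y) = smul c (mult x y)"
  using assms unfolding bilinear_prod_def by blast+

lemma bilinear_prod_zero_left: "bilinear_prod smul mult \<Longrightarrow> mult 0 x = 0"
  using bilinear_prod_add_left[of smul mult 0 0 x] by simp

lemma bilinear_prod_zero_right: "bilinear_prod smul mult \<Longrightarrow> mult x 0 = 0"
  using bilinear_prod_add_right[of smul mult x 0 0] by simp

lemma module_prod_scale_eq_pair_scale:
  assumes "module smul"
  shows "module_prod.scale smul smul = pair_scale smul"
proof -
  interpret module_prod smul smul
    using assms by (simp add: module_prod_def module_pair_def)
  show ?thesis
    by (simp add: fun_eq_iff scale_def pair_scale_def)
qed

lemma module_pair_scale: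
  assumes "module smul"
  shows "module (pair_scale smul)"
proof -
  interpret module_prod smul smul
    using assms by (simp add: module_prod_def module_pair_def)
  show ?thesis
    using p.module_axioms module_prod_scale_eq_pair_scale[OF assms] by simp
qed

lemma vector_space_pair_scale:
  assumes "vector_space smul"
  shows "vector_space (pair_scale smul)"
proof -
  interpret vector_space_prod smul smul
    using assms by (simp add: vector_space_prod_def vector_space_pair_def)
  show ?thesis
    using p.vector_space_axioms module_prod_scale_eq_pair_scale[OF vs1.module_axioms] by simp
qed

lemma finite_dimensional_pair_scale:
  assumes "finite_dimensional_vector_space smul B"
  shows "\<exists>B'. finite_dimensional_vector_space (pair_scale smul) B'"
proof -
  interpret finite_dimensional_vector_space_prod smul smul B B
    using assms by (simp add: finite_dimensional_vector_space_prod_def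
        finite_dimensional_vector_space_pair_def vector_space_prod_def vector_space_pair_def
        finite_dimensional_vector_space_def)
  show ?thesis
    using p.finite_dimensional_vector_space_axioms
      module_prod_scale_eq_pair_scale[OF vs1.module_axioms] by auto
qed

lemma bilinear_prod_zeta_mult:
  assumes "module smul" and "bilinear_prod smul mult"
  shows "bilinear_prod (pair_scale smul) (zeta_mult smul mult \<zeta>)"
proof -
  interpret module smul by (fact assms(1))
  show ?thesis
    using assms(2)
    by (simp add: bilinear_prod_def zeta_mult_def pair_scale_def scale_right_distrib
        mult.commute add_ac)
qed

lemma zeta_mult_commute:
  fixes mult :: "'v::ab_semigroup_add \<Rightarrow> 'v \<Rightarrow> 'v"
  assumes "\<And>x y. mult x y = mult y x"
  shows "zeta_mult smul mult \<zeta> p q = zeta_mult smul mult \<zeta> q p"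
  by (simp add: zeta_mult_def assms[of "fst p"] assms[of "snd p"] add.commute)

lemma comm_fd_algebra_zeta_mult:
  assumes "comm_fd_algebra smul mult"
  shows "comm_fd_algebra (pair_scale smul) (zeta_mult smul mult \<zeta>)"
proof -
  from assms obtain B where fd: "finite_dimensional_vector_space smul B"
    and bil: "bilinear_prod smul mult" and comm: "\<And>x y. mult x y = mult y x"
    unfolding comm_fd_algebra_def by blast
  have "module smul"
    using fd by (simp add: finite_dimensional_vector_space_def vector_space_def module_def)
  then show ?thesis
    unfolding comm_fd_algebra_def
    using finite_dimensional_pair_scale[OF fd] bilinear_prod_zeta_mult[OF _ bil]
      zeta_mult_commute[of mult, OF comm] by (intro conjI allI) auto
qed

lemma medial_zeta_mult:
  assumes "module smul" and bil: "bilinear_prod smul mult" and med: "medial mult"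
    and zeta_square: "\<zeta> * \<zeta> = 1"
  shows "medial (zeta_mult smul mult \<zeta>)"
proof -
  interpret module smul by (fact assms(1))
  have medial_law: "mult (mult x y) (mult z w) = mult (mult x z) (mult y w)" for x y z w
    using med unfolding medial_on_def by blast
  \<comment> \<open>The medial law is permutative, so the simplifier applies it as an ordered rewrite rule
    and brings the matching terms of both sides to the same normal form.\<close>
  show ?thesis
    unfolding medial_on_def zeta_mult_def
    by (simp add: bilinear_prodD[OF bil] scale_right_distrib zeta_square medial_law add_ac)
qed

lemma medial_on_subset: "medial_on T mult \<Longrightarrow> S \<subseteq> T \<Longrightarrow> medial_on S mult"
  unfolding medial_on_def by blast

lemma subalgebra_zeta_mult_first_factor:
  assumes "module smul" and bil: "bilinear_prod smul mult"
  shows "subalgebra (pair_scale smul) (zeta_mult smul mult \<zeta>) (UNIV \<times> {0})"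
  unfolding subalgebra_def module.subspace_def[OF module_pair_scale[OF assms(1)]]
  using module.scale_zero_right[OF assms(1)]
  by (auto simp: pair_scale_def zeta_mult_def zero_prod_def
      bilinear_prod_zero_left[OF bil] bilinear_prod_zero_right[OF bil])

lemma alg_iso_onto_zeta_mult_first_factor:
  assumes "vector_space smul" and bil: "bilinear_prod smul mult"
  shows "alg_iso_onto smul mult (pair_scale smul) (zeta_mult smul mult \<zeta>) (UNIV \<times> {0})
    (\<lambda>x. (x, 0))"
  unfolding alg_iso_onto_def
proof (intro conjI allI)
  interpret vector_space smul by (fact assms(1))
  show "Vector_Spaces.linear smul (pair_scale smul) (\<lambda>x. (x, 0))"
    using vector_space_axioms vector_space_pair_scale[OF assms(1)] module_axioms
      module_pair_scale[OF module_axioms]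
    by (auto simp: Vector_Spaces.linear_def module_hom_def module_hom_axioms_def pair_scale_def)
  show "bij_betw (\<lambda>x. (x, 0)) UNIV (UNIV \<times> {0})"
    by (auto simp: bij_betw_def inj_on_def)
  show "(mult x y, 0) = zeta_mult smul mult \<zeta> (x, 0) (y, 0)" for x y
    by (simp add: zeta_mult_def bilinear_prod_zero_left[OF bil] bilinear_prod_zero_right[OF bil])
qed

theorem proposition3p13:
  fixes smul :: "'k::field \<Rightarrow> 'v::ab_group_add \<Rightarrow> 'v"
    and mult :: "'v \<Rightarrow> 'v \<Rightarrow> 'v"
    and \<zeta> :: 'k
  assumes alg: "comm_fd_algebra smul mult"
    and med: "medial mult"
    and char2: "(2::'k) \<noteq> 0"
    and char3: "(3::'k) \<noteq> 0"
    and zeta: "\<zeta> \<in> {-1, 1}"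
  shows "comm_fd_algebra (pair_scale smul) (zeta_mult smul mult \<zeta>)
    \<and> medial (zeta_mult smul mult \<zeta>)
    \<and> subalgebra (pair_scale smul) (zeta_mult smul mult \<zeta>) (UNIV \<times> {0})
    \<and> medial_on (UNIV \<times> {0}) (zeta_mult smul mult \<zeta>)
    \<and> (\<exists>f. alg_iso_onto smul mult (pair_scale smul) (zeta_mult smul mult \<zeta>) (UNIV \<times> {0}) f)"
proof -
  from alg obtain B where fd: "finite_dimensional_vector_space smul B"
    and bil: "bilinear_prod smul mult"
    unfolding comm_fd_algebra_def by blast
  then have vs: "vector_space smul" and md: "module smul"
    by (simp_all add: finite_dimensional_vector_space_def vector_space_def module_def)
  have "\<zeta> * \<zeta> = 1"
    using zeta by auto
  then have medial_zeta: "medial (zeta_mult smul mult \<zeta>)"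
    using medial_zeta_mult[OF md bil med] by blast
  show ?thesis
    using comm_fd_algebra_zeta_mult[OF alg] medial_zeta
      subalgebra_zeta_mult_first_factor[OF md bil]
      medial_on_subset[OF medial_zeta subset_UNIV]
      alg_iso_onto_zeta_mult_first_factor[OF vs bil]
    by blast
qed

end
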